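(* Let $n\ge p\ge1$, $0<\varepsilon<1$, $\lambda>0$. For every $X\in\mathbb{R}^{n\times p}$ with $\|X^\top X-I_p\|\le\varepsilon$ and every skew-symmetric $A\in\mathbb{R}^{n\times n}$, the field $F(X,A)=AX+\lambda X(X^\top X-I_p)$ satisfies $$\|AX\|^2+4\lambda^2(1-\varepsilon)\mathcal{N}(X)\le\|F(X,A)\|^2\le\|AX\|^2+4\lambda^2(1+\varepsilon)\mathcal{N}(X),$$ where $\mathcal{N}(X)=\frac14\|X^\top X-I_p\|^2$.
   Context: $\|\cdot\|$ denotes the Frobenius norm. Note $\nabla\mathcal{N}(X)=X(X^\top X-I_p)$, so $F(X,A)=AX+\lambda\nabla\mathcal{N}(X)$. *)

theory Defs
  imports "HOL-Analysis.Analysis"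
begin

(* For matrices M :: real^'c^'r, the library norm is the Euclidean norm of the
   vector of all entries, i.e. the Frobenius norm. *)

definition penaltyN :: "real^'p^'n \<Rightarrow> real" where
  "penaltyN X = (1/4) * (norm (transpose X ** X - mat 1))\<^sup>2"

definition fieldF :: "real \<Rightarrow> real^'p^'n \<Rightarrow> real^'n^'n \<Rightarrow> real^'p^'n" where
  "fieldF lam X A = A ** X + lam *\<^sub>R (X ** (transpose X ** X - mat 1))"

end

theory Submission
  imports Defs
begin

text \<open>
  Write \<open>S = X\<^sup>T X - I\<close>, a symmetric matrix, so that \<open>F(X,A) = A X + \<lambda> X S\<close>.
  The two summands are orthogonal: \<open>\<langle>A X, X S\<rangle> = \<langle>A, X S X\<^sup>T\<rangle>\<close> pairs a skew-symmetric
  with a symmetric matrix. Moreover \<open>\<parallel>X S\<parallel>\<^sup>2 = \<langle>S, X\<^sup>T X S\<rangle> = \<parallel>S\<parallel>\<^sup>2 + \<langle>S, S\<^sup>2\<rangle>\<close>, and by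
  Cauchy-Schwarz and submultiplicativity of the Frobenius norm
  \<open>|\<langle>S, S\<^sup>2\<rangle>| \<le> \<parallel>S\<parallel>\<^sup>3 \<le> \<epsilon> \<parallel>S\<parallel>\<^sup>2\<close>, while \<open>\<parallel>S\<parallel>\<^sup>2 = 4 \<N>(X)\<close>.
\<close>

lemma inner_transpose: "transpose (M::real^'c^'r) \<bullet> transpose N = M \<bullet> N"
  unfolding inner_vec_def transpose_def by (simp add: sum.swap[of "\<lambda>i j. M $ j $ i * N $ j $ i"])

lemma inner_eq_trace: "(M::real^'c^'r) \<bullet> N = trace (transpose M ** N)"
  unfolding inner_vec_def trace_def matrix_matrix_mult_def transpose_def
  by (simp add: sum.swap[of "\<lambda>i j. M $ i $ j * N $ i $ j"])

lemma inner_matrix_mult_left: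
  "((M::real^'k^'r) ** (N::real^'c^'k)) \<bullet> P = N \<bullet> (transpose M ** P)"
  by (simp add: inner_eq_trace matrix_transpose_mul matrix_mul_assoc)

lemma inner_matrix_mult_right:
  "((M::real^'k^'r) ** (N::real^'c^'k)) \<bullet> P = M \<bullet> (P ** transpose N)"
proof -
  have "(M ** N) \<bullet> P = trace (transpose N ** (transpose M ** P))"
    by (simp add: inner_eq_trace matrix_transpose_mul matrix_mul_assoc)
  also have "\<dots> = trace (transpose M ** P ** transpose N)"
    by (rule trace_mul_sym)
  finally show ?thesis
    by (simp add: inner_eq_trace matrix_mul_assoc)
qed

lemma inner_skew_symmetric_eq_0:
  fixes A S :: "real^'n^'n"
  assumes "transpose A = - A" and "transpose S = S"
  shows "A \<bullet> S = 0"
proof -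
  have "A \<bullet> S = - (A \<bullet> S)"
    by (metis assms inner_minus_left inner_transpose)
  then show ?thesis by simp
qed

lemma orthogonal_skew_mult_symmetric:
  fixes A :: "real^'n^'n" and X :: "real^'p^'n" and S :: "real^'p^'p"
  assumes "transpose A = - A" and "transpose S = S"
  shows "orthogonal (A ** X) (X ** S)"
proof -
  have "transpose (X ** S ** transpose X) = X ** S ** transpose X"
    by (simp add: matrix_transpose_mul assms(2) matrix_mul_assoc)
  then show ?thesis
    unfolding orthogonal_def inner_matrix_mult_right
    by (rule inner_skew_symmetric_eq_0[OF assms(1)])
qed

lemma norm_transpose: "norm (transpose (M::real^'c^'r)) = norm M"
  by (simp add: norm_eq_sqrt_inner inner_transpose)

lemma norm_squared_eq_sum_rows: "(norm (M::real^'c^'r))\<^sup>2 = (\<Sum>i\<in>UNIV. (norm (M $ i))\<^sup>2)"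
  by (simp add: power2_norm_eq_inner inner_vec_def)

lemma matrix_mult_entry_eq_inner: "((M::real^'k^'r) ** (N::real^'c^'k)) $ i $ j = M $ i \<bullet> transpose N $ j"
  by (simp add: matrix_matrix_mult_def inner_vec_def transpose_def)

lemma norm_matrix_mult_le: "norm ((M::real^'k^'r) ** (N::real^'c^'k)) \<le> norm M * norm N"
proof -
  have "(norm (M ** N))\<^sup>2 = (\<Sum>i\<in>UNIV. \<Sum>j\<in>UNIV. ((M ** N) $ i $ j)\<^sup>2)"
    unfolding power2_norm_eq_inner inner_vec_def by (simp add: power2_eq_square)
  also have "\<dots> = (\<Sum>i\<in>UNIV. \<Sum>j\<in>UNIV. (M $ i \<bullet> transpose N $ j)\<^sup>2)"
    by (simp only: matrix_mult_entry_eq_inner)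
  also have "\<dots> \<le> (\<Sum>i\<in>UNIV. \<Sum>j\<in>UNIV. (norm (M $ i))\<^sup>2 * (norm (transpose N $ j))\<^sup>2)"
  proof (intro sum_mono)
    fix i j
    have "\<bar>M $ i \<bullet> transpose N $ j\<bar> \<le> \<bar>norm (M $ i) * norm (transpose N $ j)\<bar>"
      using Cauchy_Schwarz_ineq2 by simp
    then show "(M $ i \<bullet> transpose N $ j)\<^sup>2 \<le> (norm (M $ i))\<^sup>2 * (norm (transpose N $ j))\<^sup>2"
      by (simp only: abs_le_square_iff power_mult_distrib)
  qed
  also have "\<dots> = (\<Sum>i\<in>UNIV. (norm (M $ i))\<^sup>2) * (\<Sum>j\<in>UNIV. (norm (transpose N $ j))\<^sup>2)"
    by (rule sum_product[symmetric])
  also have "\<dots> = (norm M * norm N)\<^sup>2"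
    by (simp only: norm_squared_eq_sum_rows[symmetric] norm_transpose power_mult_distrib)
  finally show ?thesis
    by (rule power2_le_imp_le) simp
qed

lemma abs_inner_mult_self_le: "\<bar>(M::real^'n^'n) \<bullet> (M ** M)\<bar> \<le> norm M ^ 3"
proof -
  have "\<bar>M \<bullet> (M ** M)\<bar> \<le> norm M * norm (M ** M)"
    by (rule Cauchy_Schwarz_ineq2)
  also have "\<dots> \<le> norm M * (norm M * norm M)"
    by (intro mult_left_mono norm_matrix_mult_le) simp
  finally show ?thesis
    by (simp add: power3_eq_cube)
qed

lemma norm_mult_gram_deviation_squared:
  fixes X :: "real^'p^'n"
  defines "S \<equiv> transpose X ** X - mat 1"
  shows "(norm (X ** S))\<^sup>2 = (norm S)\<^sup>2 + S \<bullet> (S ** S)"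
proof -
  have "(norm (X ** S))\<^sup>2 = S \<bullet> (transpose X ** X ** S)"
    by (simp add: power2_norm_eq_inner inner_matrix_mult_left matrix_mul_assoc)
  also have "\<dots> = S \<bullet> ((S + mat 1) ** S)"
    by (simp add: S_def)
  also have "(S + mat 1) ** S = S ** S + mat 1 ** S"
    by (simp add: matrix_matrix_mult_def vec_eq_iff sum.distrib distrib_right del: matrix_mul_lid)
  finally show ?thesis
    by (simp add: inner_add_right power2_norm_eq_inner)
qed

lemma norm_fieldF_squared:
  fixes X :: "real^'p^'n" and A :: "real^'n^'n"
  defines "S \<equiv> transpose X ** X - mat 1"
  assumes "transpose A = - A"
  shows "(norm (fieldF lam X A))\<^sup>2 = (norm (A ** X))\<^sup>2 + lam\<^sup>2 * (norm S)\<^sup>2 + lam\<^sup>2 * (S \<bullet> (S ** S))"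
proof -
  have "transpose S = S"
    by (simp add: S_def transpose_def vec_eq_iff matrix_matrix_mult_def mat_def mult.commute)
  then have "orthogonal (A ** X) (lam *\<^sub>R (X ** S))"
    by (intro orthogonal_clauses(2) orthogonal_skew_mult_symmetric[OF assms(2)])
  then show ?thesis
    unfolding fieldF_def S_def[symmetric]
    by (simp add: norm_add_Pythagorean power_mult_distrib S_def norm_mult_gram_deviation_squared
        distrib_left)
qed

theorem proposition2:
  fixes X :: "real^'p^'n" and A :: "real^'n^'n" and eps lam :: real
  assumes "CARD('p) \<le> CARD('n)"
    and "0 < eps" and "eps < 1" and "lam > 0"
    and "norm (transpose X ** X - mat 1) \<le> eps"
    and "transpose A = - A"
  shows "(norm (A ** X))\<^sup>2 + 4 * lam\<^sup>2 * (1 - eps) * penaltyN X \<le> (norm (fieldF lam X A))\<^sup>2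
       \<and> (norm (fieldF lam X A))\<^sup>2 \<le> (norm (A ** X))\<^sup>2 + 4 * lam\<^sup>2 * (1 + eps) * penaltyN X"
proof -
  define S where "S = transpose X ** X - mat 1"
  have "\<bar>S \<bullet> (S ** S)\<bar> \<le> norm S * (norm S)\<^sup>2"
    using abs_inner_mult_self_le[of S] by (simp add: power3_eq_cube power2_eq_square)
  also have "\<dots> \<le> eps * (norm S)\<^sup>2"
    using assms(5) by (intro mult_right_mono) (simp_all add: S_def)
  finally have "\<bar>lam\<^sup>2 * (S \<bullet> (S ** S))\<bar> \<le> lam\<^sup>2 * (eps * (norm S)\<^sup>2)"
    by (simp add: abs_mult mult_left_mono)
  moreover have "4 * lam\<^sup>2 * (1 - eps) * penaltyN X = lam\<^sup>2 * (norm S)\<^sup>2 - lam\<^sup>2 * (eps * (norm S)\<^sup>2)"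
    and "4 * lam\<^sup>2 * (1 + eps) * penaltyN X = lam\<^sup>2 * (norm S)\<^sup>2 + lam\<^sup>2 * (eps * (norm S)\<^sup>2)"
    by (simp_all add: penaltyN_def S_def algebra_simps)
  moreover note norm_fieldF_squared[OF assms(6), where X = X and lam = lam, folded S_def]
  ultimately show ?thesis
    by linarith
qed

end
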